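(* Let $c>0$, $a=\ln c$, and let $\phi^{\bullet}(\epsilon;c)$, $\phi^{\ell_2}(\epsilon;c)$ be as below. Define $$\phi^{\ell_2}_{\mathrm{ren}}(c)=\lim_{\epsilon\to0^+}\Big[\phi^{\ell_2}-R(\phi^{\ell_2})-R(\phi^{\bullet})\,\phi^{\bullet}+R\big(R(\phi^{\bullet})\,\phi^{\bullet}\big)\Big](\epsilon;c).$$ Then the limit exists and $\phi^{\ell_2}_{\mathrm{ren}}(c)=\dfrac{a^2}{2}+\dfrac{\pi^2}{4}$.
   Context: For $c>0$ and $0<\epsilon<1/2$: $\phi^{\bullet}(\epsilon;c)=\int_0^\infty\frac{y^{-\epsilon}dy}{y+c}$ and $\phi^{\ell_2}(\epsilon;c)=\int_0^\infty\frac{y^{-\epsilon}dy}{y+c}\int_0^\infty\frac{z^{-\epsilon}dz}{z+y}$. The subtraction operator $R$ acts on a function $F(\epsilon;c)$ which, for each fixed $c$, has a Laurent expansion in $\epsilon$ at $\epsilon=0$ with finite principal part: $R(F)$ is the function of $\epsilon$ alone (constant in $c$) equal to the principal (pole) part of the Laurent expansion of $\epsilon\mapsto F(\epsilon;1)$. Products such as $R(\phi^\bullet)\phi^\bullet$ are pointwise products of functions of $(\epsilon,c)$. *)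

theory Defs
  imports "HOL-Analysis.Analysis"
begin

definition phi_dot :: "real \<Rightarrow> real \<Rightarrow> real" where
  "phi_dot \<epsilon> c = (LBINT y:{0<..}. y powr (-\<epsilon>) / (y + c))"

definition phi_l2 :: "real \<Rightarrow> real \<Rightarrow> real" where
  "phi_l2 \<epsilon> c = (LBINT y:{0<..}. y powr (-\<epsilon>) / (y + c) *
                      (LBINT z:{0<..}. z powr (-\<epsilon>) / (z + y)))"

definition is_principal_part :: "(real \<Rightarrow> real) \<Rightarrow> (real \<Rightarrow> real) \<Rightarrow> bool" where
  "is_principal_part f P \<longleftrightarrow>
     (\<exists>N a. P = (\<lambda>\<epsilon>. \<Sum>k=1..N. a k / \<epsilon> ^ k)) \<and>
     (\<exists>b r. r > 0 \<and> (\<forall>\<epsilon>\<in>{0<..<r}. (\<lambda>n. b n * \<epsilon> ^ n) sums (f \<epsilon> - P \<epsilon>)))"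

definition principal_part :: "(real \<Rightarrow> real) \<Rightarrow> real \<Rightarrow> real" where
  "principal_part f = (THE P. is_principal_part f P)"

definition R_op :: "(real \<Rightarrow> real \<Rightarrow> real) \<Rightarrow> real \<Rightarrow> real \<Rightarrow> real" where
  "R_op F = (\<lambda>\<epsilon> c. principal_part (\<lambda>e. F e 1) \<epsilon>)"

definition phi_l2_bracket :: "real \<Rightarrow> real \<Rightarrow> real" where
  "phi_l2_bracket \<epsilon> c =
     phi_l2 \<epsilon> c - R_op phi_l2 \<epsilon> c - R_op phi_dot \<epsilon> c * phi_dot \<epsilon> c
     + R_op (\<lambda>e d. R_op phi_dot e d * phi_dot e d) \<epsilon> c"

end

theory Submission
  imports Defs "HOL-Complex_Analysis.Cauchy_Integral_Formula" "HOL-Real_Asymp.Real_Asymp"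
begin

text \<open>
  The substitution \<open>y = c t / (1 - t)\<close> turns \<open>\<phi>\<^sup>\<bullet>(\<epsilon>; c)\<close> into a Beta integral, whence
  \<open>\<phi>\<^sup>\<bullet>(\<epsilon>; c) = c powr -\<epsilon> \<pi> / sin (\<pi> \<epsilon>)\<close>. The inner integral of \<open>\<phi>\<^sup>\<ell>\<^sub>2(\<epsilon>; c)\<close> is
  \<open>\<phi>\<^sup>\<bullet>(\<epsilon>; y)\<close>, so \<open>\<phi>\<^sup>\<ell>\<^sub>2(\<epsilon>; c) = c powr -2\<epsilon> \<pi>\<^sup>2 / (sin (\<pi> \<epsilon>) sin (2 \<pi> \<epsilon>))\<close>.
  As \<open>\<pi> z / sin (\<pi> z)\<close> is even and holomorphic near \<open>0\<close> with value \<open>1\<close> there, the principal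
  parts can be read off its Taylor series: \<open>R(\<phi>\<^sup>\<bullet>) = 1/\<epsilon>\<close>, \<open>R(R(\<phi>\<^sup>\<bullet>) \<phi>\<^sup>\<bullet>) = 1/\<epsilon>\<^sup>2\<close> and
  \<open>R(\<phi>\<^sup>\<ell>\<^sub>2) = 1/(2\<epsilon>\<^sup>2)\<close>. The bracket is then an explicit elementary function of \<open>\<epsilon>\<close>, and its
  limit is a routine asymptotic expansion.
\<close>

section \<open>Principal parts\<close>

lemma sum_inverse_powers_tendsto_imp_zero:
  fixes d :: "nat \<Rightarrow> real"
  assumes "((\<lambda>e. \<Sum>k=1..K. d k / e ^ k) \<longlongrightarrow> L) (at_right 0)"
  shows "\<forall>k\<in>{1..K}. d k = 0"
  using assms
proof (induction K)
  case 0
  then show ?case by simp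
next
  case (Suc n)
  txt \<open>Multiplied by \<open>e ^ Suc n\<close>, the sum becomes a polynomial whose value at \<open>0\<close> is \<open>d (Suc n)\<close>.\<close>
  have "((\<lambda>e. e ^ Suc n * (\<Sum>k=1..Suc n. d k / e ^ k)) \<longlongrightarrow> 0 ^ Suc n * L) (at_right 0)"
    by (intro tendsto_intros Suc.prems)
  moreover have "e ^ Suc n * (\<Sum>k=1..Suc n. d k / e ^ k) = (\<Sum>k=1..Suc n. d k * e ^ (Suc n - k))"
    if "e > 0" for e :: real
    unfolding sum_distrib_left by (rule sum.cong) (use that in \<open>auto simp: power_diff\<close>)
  then have "eventually (\<lambda>e. e ^ Suc n * (\<Sum>k=1..Suc n. d k / e ^ k) =
      (\<Sum>k=1..Suc n. d k * e ^ (Suc n - k))) (at_right 0)"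
    using eventually_at_right_less[of 0] by (auto elim: eventually_mono)
  ultimately have "((\<lambda>e. \<Sum>k=1..Suc n. d k * e ^ (Suc n - k)) \<longlongrightarrow> 0) (at_right 0)"
    by (simp add: tendsto_cong)
  moreover have "((\<lambda>e. \<Sum>k=1..Suc n. d k * e ^ (Suc n - k)) \<longlongrightarrow>
      (\<Sum>k=1..Suc n. d k * 0 ^ (Suc n - k))) (at_right (0::real))"
    by (intro tendsto_intros)
  ultimately have "d (Suc n) = 0"
    using tendsto_unique[of "at_right (0::real)"] by (force simp: power_0_left)
  with Suc.prems have "((\<lambda>e. \<Sum>k=1..n. d k / e ^ k) \<longlongrightarrow> L) (at_right 0)"
    by simp
  with Suc.IH \<open>d (Suc n) = 0\<close> show ?case
    by (auto simp: le_Suc_eq)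
qed

lemma is_principal_part_unique:
  assumes "is_principal_part f P" "is_principal_part f Q"
  shows "P = Q"
proof -
  obtain N a b r where P: "P = (\<lambda>e. \<Sum>k=1..N. a k / e ^ k)" and "r > 0"
    and b: "\<forall>e\<in>{0<..<r}. (\<lambda>n. b n * e ^ n) sums (f e - P e)"
    using assms(1) unfolding is_principal_part_def by blast
  obtain M a' b' r' where Q: "Q = (\<lambda>e. \<Sum>k=1..M. a' k / e ^ k)" and "r' > 0"
    and b': "\<forall>e\<in>{0<..<r'}. (\<lambda>n. b' n * e ^ n) sums (f e - Q e)"
    using assms(2) unfolding is_principal_part_def by blast
  define K where "K = max N M"
  define d where "d k = (if k \<le> N then a k else 0) - (if k \<le> M then a' k else 0)" for k
  have pad: "(\<Sum>k=1..L. g k / e ^ k) = (\<Sum>k=1..K. (if k \<le> L then g k else 0) / e ^ k)"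
    if "L \<le> K" for L g and e :: real
    by (rule sum.mono_neutral_cong_left) (use that in auto)
  have PQ: "P e - Q e = (\<Sum>k=1..K. d k / e ^ k)" for e
    unfolding P Q d_def diff_divide_distrib sum_subtractf
    by (subst pad[of N], simp add: K_def, subst pad[of M]) (simp_all add: K_def)
  txt \<open>Near \<open>0\<close> the sum of inverse powers \<open>P - Q\<close> is a power series, so it has a limit at \<open>0\<close>.\<close>
  define r0 where "r0 = min r r'"
  define G where "G x = (\<Sum>n. (b' n - b n) * x ^ n)" for x :: real
  have G_sums: "(\<lambda>n. (b' n - b n) * e ^ n) sums (P e - Q e)" if "e \<in> {0<..<r0}" for e
  proof -
    have "(\<lambda>n. b' n * e ^ n - b n * e ^ n) sums ((f e - Q e) - (f e - P e))"
      using b b' that by (intro sums_diff) (auto simp: r0_def)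
    then show ?thesis by (simp add: algebra_simps)
  qed
  have "r0 > 0"
    using \<open>r > 0\<close> \<open>r' > 0\<close> by (simp add: r0_def)
  then have "summable (\<lambda>n. (b' n - b n) * (r0 / 2) ^ n)"
    using G_sums[of "r0 / 2"] by (auto intro: sums_summable)
  then have "isCont G 0"
    unfolding G_def by (rule isCont_powser) (use \<open>r0 > 0\<close> in auto)
  then have "(G \<longlongrightarrow> G 0) (at_right 0)"
    by (simp add: isCont_def filterlim_at_split)
  moreover have "eventually (\<lambda>e. G e = (\<Sum>k=1..K. d k / e ^ k)) (at_right 0)"
    unfolding eventually_at_right_field
    using \<open>r0 > 0\<close> G_sums by (auto simp: G_def PQ sums_iff)
  ultimately have "((\<lambda>e. \<Sum>k=1..K. d k / e ^ k) \<longlongrightarrow> G 0) (at_right 0)"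
    by (simp add: tendsto_cong)
  then have "\<forall>k\<in>{1..K}. d k = 0"
    by (rule sum_inverse_powers_tendsto_imp_zero)
  then show ?thesis
    using PQ by fastforce
qed

lemma principal_part_eqI: "is_principal_part f P \<Longrightarrow> principal_part f = P"
  unfolding principal_part_def by (rule the_equality) (auto intro: is_principal_part_unique)

lemma is_principal_part_powser_div_power:
  fixes b :: "nat \<Rightarrow> real"
  assumes "r > 0" and b: "\<And>e. e \<in> {0<..<r} \<Longrightarrow> (\<lambda>n. b n * e ^ n) sums (e ^ k * f e)"
  shows "is_principal_part f (\<lambda>e. \<Sum>j=1..k. b (k - j) / e ^ j)"
  unfolding is_principal_part_def
proof (intro conjI exI ballI)
  fix e assume e: "e \<in> {0<..<r}"
  have "(\<lambda>n. b (n + k) * e ^ (n + k)) sums (e ^ k * f e - (\<Sum>i<k. b i * e ^ i))"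
    using b[OF e] by (subst sums_iff_shift) simp
  then have "(\<lambda>n. b (n + k) * e ^ (n + k) / e ^ k) sums ((e ^ k * f e - (\<Sum>i<k. b i * e ^ i)) / e ^ k)"
    by (rule sums_divide)
  moreover have "(\<Sum>i<k. b i * e ^ i) / e ^ k = (\<Sum>j=1..k. b (k - j) / e ^ j)"
    unfolding sum_divide_distrib
    by (rule sum.reindex_bij_witness[of _ "\<lambda>j. k - j" "\<lambda>i. k - i"])
       (use e in \<open>auto simp: power_diff\<close>)
  ultimately show "(\<lambda>n. b (n + k) * e ^ n) sums (f e - (\<Sum>j=1..k. b (k - j) / e ^ j))"
    using e by (simp add: power_add diff_divide_distrib)
qed (use \<open>r > 0\<close> in auto)

lemma holomorphic_Re_power_series:
  assumes "H holomorphic_on ball 0 R" "\<bar>x\<bar> < R"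
  shows "(\<lambda>n. Re ((deriv ^^ n) H 0 / fact n) * x ^ n) sums Re (H (of_real x))"
proof -
  have "(\<lambda>n. (deriv ^^ n) H 0 / fact n * (of_real x - 0) ^ n) sums H (of_real x)"
    by (rule holomorphic_power_series[OF assms(1)]) (use assms(2) in simp)
  then have "(\<lambda>n. Re (x ^ n *\<^sub>R ((deriv ^^ n) H 0 / fact n))) sums Re (H (of_real x))"
    by (auto dest: sums_Re simp: scaleR_conv_of_real mult.commute)
  then show ?thesis
    by (simp add: mult.commute)
qed

lemma principal_part_holomorphic_div_power:
  assumes "H holomorphic_on ball 0 R" "R > 0"
    and "\<And>e. 0 < e \<Longrightarrow> e < R \<Longrightarrow> e ^ k * f e = Re (H (of_real e))"
  shows "principal_part f = (\<lambda>e. \<Sum>j=1..k. Re ((deriv ^^ (k - j)) H 0 / fact (k - j)) / e ^ j)"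
  using assms holomorphic_Re_power_series[OF assms(1)]
  by (intro principal_part_eqI is_principal_part_powser_div_power[of R]) auto

section \<open>The function \<open>\<pi> z / sin (\<pi> z)\<close>\<close>

definition sinc_pi :: "complex \<Rightarrow> complex" where
  "sinc_pi z = (if z = 0 then of_real pi else sin (of_real pi * z) / z)"

definition pi_z_csc :: "complex \<Rightarrow> complex" where
  "pi_z_csc z = of_real pi / sinc_pi z"

lemma sinc_pi_holomorphic: "sinc_pi holomorphic_on UNIV"
proof -
  have "((\<lambda>z. sin (of_real pi * z)) has_field_derivative of_real pi) (at (0::complex))"
    by (auto intro!: derivative_eq_intros)
  then have "deriv (\<lambda>z. sin (of_real pi * z)) 0 = (of_real pi :: complex)"
    by (rule DERIV_imp_deriv)
  then have sinc_pi_eq: "sinc_pi = (\<lambda>z. if z = 0 then deriv (\<lambda>z. sin (of_real pi * z)) 0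
                         else (sin (of_real pi * z) - sin (of_real pi * 0)) / (z - 0))"
    by (intro ext) (auto simp: sinc_pi_def)
  show ?thesis
    unfolding sinc_pi_eq by (rule pole_lemma) (auto intro!: holomorphic_intros)
qed

lemma sinc_pi_nonzero:
  assumes "norm z < 1"
  shows "sinc_pi z \<noteq> 0"
proof (cases "z = 0")
  case False
  have "sin (of_real pi * z) \<noteq> 0"
  proof
    assume "sin (of_real pi * z) = 0"
    then obtain n :: int where "of_real pi * z = of_real (of_int n * pi)"
      by (auto simp: sin_eq_0)
    then have "z = of_int n"
      by (simp add: field_simps)
    with assms have "\<bar>of_int n :: real\<bar> < 1"
      by (metis norm_of_int)
    with False \<open>z = of_int n\<close> show False
      by simp
  qed
  with False show ?thesis
    by (simp add: sinc_pi_def)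
qed (simp add: sinc_pi_def)

lemma pi_z_csc_holomorphic: "pi_z_csc holomorphic_on ball 0 1"
  unfolding pi_z_csc_def [abs_def]
  using holomorphic_on_subset[OF sinc_pi_holomorphic] sinc_pi_nonzero
  by (intro holomorphic_intros) auto

lemma pi_z_csc_0 [simp]: "pi_z_csc 0 = 1"
  by (simp add: pi_z_csc_def sinc_pi_def)

lemma pi_z_csc_minus [simp]: "pi_z_csc (- z) = pi_z_csc z"
  by (simp add: pi_z_csc_def sinc_pi_def)

lemma pi_z_csc_of_real: "x \<noteq> 0 \<Longrightarrow> pi_z_csc (of_real x) = of_real (pi * x / sin (pi * x))"
  by (simp add: pi_z_csc_def sinc_pi_def sin_of_real flip: of_real_mult)

lemma deriv_even_at_0:
  assumes holo: "H holomorphic_on ball 0 R" and "R > 0"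
    and even: "\<And>z. z \<in> ball 0 R \<Longrightarrow> H (- z) = H z"
  shows "deriv H 0 = 0"
proof -
  have D: "(H has_field_derivative deriv H 0) (at 0)"
    using holomorphic_derivI[OF holo open_ball, of 0] \<open>R > 0\<close> by simp
  have "((\<lambda>z. H (- z)) has_field_derivative deriv H 0 * (-1)) (at 0)"
    by (rule DERIV_chain2[where g=uminus]) (use D in \<open>auto intro!: derivative_eq_intros\<close>)
  then have "(H has_field_derivative deriv H 0 * (-1)) (at 0)"
    by (rule has_field_derivative_transform_within_open[of _ _ _ "ball 0 R"]) (use \<open>R > 0\<close> even in auto)
  with D have "deriv H 0 = deriv H 0 * (-1)"
    by (rule DERIV_unique)
  then show ?thesis
    by simp
qed

lemma deriv_pi_z_csc_0: "deriv pi_z_csc 0 = 0"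
  by (rule deriv_even_at_0[OF pi_z_csc_holomorphic]) auto

section \<open>Closed forms of the integrals\<close>

lemma Beta_complement:
  assumes "0 < e" "e < (1::real)"
  shows "Beta (1 - e) e = pi / sin (pi * e)"
proof -
  have "complex_of_real (Beta (1 - e) e) = Gamma (of_real e) * Gamma (1 - of_real e)"
    by (simp add: Beta_def Gamma_complex_of_real flip: Gamma_complex_of_real)
  also have "\<dots> = of_real pi / sin (of_real pi * of_real e)"
    by (rule Gamma_reflection_complex)
  also have "\<dots> = of_real (pi / sin (pi * e))"
    by (simp add: sin_of_real flip: of_real_mult)
  finally show ?thesis
    by (simp only: of_real_eq_iff)
qed

lemma powr_div_add_has_absolute_integral:
  assumes e: "0 < e" "e < 1" and c: "c > 0"
  shows "(\<lambda>y. y powr (-e) / (y + c)) absolutely_integrable_on {0<..} \<and>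
         integral {0<..} (\<lambda>y. y powr (-e) / (y + c)) = c powr (-e) * (pi / sin (pi * e))"
proof -
  let ?S = "{0<..<1::real}" and ?f = "\<lambda>y. y powr (-e) / (y + c)"
  define g where "g t = c * t / (1 - t)" for t :: real
  define g' where "g' t = c / (1 - t)\<^sup>2" for t :: real
  have g_deriv: "(g has_field_derivative g' t) (at t within ?S)" if "t \<in> ?S" for t
    using that unfolding g_def g'_def
    by (auto intro!: derivative_eq_intros simp: field_simps power2_eq_square)
  have "inj_on g ?S"
    unfolding g_def inj_on_def using c by (auto simp: field_simps)
  have g_image: "g ` ?S = {0<..}"
  proof safe
    fix t assume "t \<in> ?S"
    then show "0 < g t" using c by (auto simp: g_def)
  next
    fix y :: real assume "0 < y"
    moreover have "1 - y / (y + c) = c / (y + c)"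
      using \<open>0 < y\<close> c by (simp add: field_simps)
    ultimately have "y / (y + c) \<in> ?S" "g (y / (y + c)) = y"
      using c by (auto simp: g_def)
    then show "y \<in> g ` ?S" by (metis image_eqI)
  qed
  have substituted: "\<bar>g' t\<bar> * ?f (g t) = c powr (-e) * (t powr ((1 - e) - 1) * (1 - t) powr (e - 1))"
    if "t \<in> ?S" for t
  proof -
    have t: "0 < t" "t < 1" using that by auto
    have "g t powr (-e) = c powr (-e) * t powr (-e) * (1 - t) powr e"
      using t c by (simp add: g_def powr_divide powr_mult powr_minus_divide divide_simps)
    moreover have "g t + c = c / (1 - t)" "\<bar>g' t\<bar> = c / (1 - t)\<^sup>2"
      using t c by (simp_all add: g_def g'_def field_simps)
    ultimately have "\<bar>g' t\<bar> * ?f (g t) =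
        c / (1 - t)\<^sup>2 * (c powr (-e) * t powr (-e) * (1 - t) powr e / (c / (1 - t)))"
      by simp
    also have "\<dots> = c powr (-e) * t powr (-e) * (1 - t) powr e / (1 - t)"
      using t c by (simp add: divide_simps power2_eq_square)
    finally show ?thesis
      using t by (simp add: powr_diff)
  qed
  have "((\<lambda>t. t powr ((1 - e) - 1) * (1 - t) powr (e - 1)) has_integral Beta (1 - e) e) ?S"
    using has_integral_Beta_real[of "1 - e" e] e by (simp add: has_integral_Icc_iff_Ioo)
  then have integral: "((\<lambda>t. \<bar>g' t\<bar> * ?f (g t)) has_integral c powr (-e) * Beta (1 - e) e) ?S"
    by (subst has_integral_cong[OF substituted]) (auto intro: has_integral_mult_right)
  moreover have "(\<lambda>t. \<bar>g' t\<bar> * ?f (g t)) absolutely_integrable_on ?S"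
  proof (rule nonnegative_absolutely_integrable_1)
    show "(\<lambda>t. \<bar>g' t\<bar> * ?f (g t)) integrable_on ?S"
      using integral by blast
    fix t assume "t \<in> ?S"
    then have "0 < g t" using c by (auto simp: g_def)
    then show "0 \<le> \<bar>g' t\<bar> * ?f (g t)"
      using c by (intro mult_nonneg_nonneg divide_nonneg_pos) auto
  qed
  ultimately have "?f absolutely_integrable_on (g ` ?S) \<and> integral (g ` ?S) ?f = c powr (-e) * Beta (1 - e) e"
    by (subst has_absolute_integral_change_of_variables_1'[OF _ g_deriv \<open>inj_on g ?S\<close>, symmetric])
       (auto simp: integral_unique)
  then show ?thesis
    using g_image Beta_complement[OF e] by simp
qed

lemma set_lborel_integral_eq_integral:
  fixes f :: "real \<Rightarrow> real"
  assumes "f absolutely_integrable_on S" "S \<in> sets borel" "f \<in> borel_measurable borel"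
  shows "(LBINT x:S. f x) = integral S f"
proof -
  have "set_integrable lborel S f"
    using assms unfolding set_integrable_def absolutely_integrable_on_def
    by (simp add: integrable_completion)
  then show ?thesis
    by (rule set_borel_integral_eq_integral)
qed

lemma phi_dot_closed_form:
  assumes "0 < e" "e < 1" "c > 0"
  shows "phi_dot e c = c powr (-e) * (pi / sin (pi * e))"
  unfolding phi_dot_def using powr_div_add_has_absolute_integral[OF assms]
  by (subst set_lborel_integral_eq_integral) auto

lemma phi_l2_closed_form:
  assumes e: "0 < e" "e < 1/2" and c: "c > 0"
  shows "phi_l2 e c = c powr (-2 * e) * (pi / sin (pi * e)) * (pi / sin (pi * (2 * e)))"
proof -
  have inner: "y powr (-e) / (y + c) * phi_dot e y = pi / sin (pi * e) * (y powr (-(2 * e)) / (y + c))"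
    if "y > 0" for y
    using that e by (simp add: phi_dot_closed_form field_simps flip: powr_add)
  have "phi_l2 e c = (LBINT y:{0<..}. pi / sin (pi * e) * (y powr (-(2 * e)) / (y + c)))"
    unfolding phi_l2_def phi_dot_def[symmetric]
    by (rule set_lebesgue_integral_cong) (use inner in auto)
  also have "\<dots> = pi / sin (pi * e) * phi_dot (2 * e) c"
    unfolding phi_dot_def by (rule set_integral_mult_right)
  finally show ?thesis
    using e c by (simp add: phi_dot_closed_form)
qed

section \<open>The subtracted bracket\<close>

lemma R_op_phi_dot: "R_op phi_dot = (\<lambda>e c. 1 / e)"
proof -
  have "principal_part (\<lambda>e. phi_dot e 1) = (\<lambda>e. \<Sum>j=1..1. Re ((deriv ^^ (1 - j)) pi_z_csc 0 / fact (1 - j)) / e ^ j)"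
  proof (rule principal_part_holomorphic_div_power[OF pi_z_csc_holomorphic])
    fix e :: real assume "0 < e" "e < 1"
    then show "e ^ 1 * phi_dot e 1 = Re (pi_z_csc (of_real e))"
      by (simp add: phi_dot_closed_form pi_z_csc_of_real)
  qed simp
  then show ?thesis
    unfolding R_op_def by simp
qed

lemma R_op_R_op_phi_dot_mult_phi_dot: "R_op (\<lambda>e d. R_op phi_dot e d * phi_dot e d) = (\<lambda>e c. 1 / e\<^sup>2)"
proof -
  have "principal_part (\<lambda>e. 1 / e * phi_dot e 1) = (\<lambda>e. \<Sum>j=1..2. Re ((deriv ^^ (2 - j)) pi_z_csc 0 / fact (2 - j)) / e ^ j)"
  proof (rule principal_part_holomorphic_div_power[OF pi_z_csc_holomorphic])
    fix e :: real assume "0 < e" "e < 1"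
    then show "e ^ 2 * (1 / e * phi_dot e 1) = Re (pi_z_csc (of_real e))"
      by (simp add: phi_dot_closed_form pi_z_csc_of_real power2_eq_square)
  qed simp
  then show ?thesis
    unfolding R_op_phi_dot unfolding R_op_def by (simp add: numeral_2_eq_2 deriv_pi_z_csc_0)
qed

lemma R_op_phi_l2: "R_op phi_l2 = (\<lambda>e c. 1 / (2 * e\<^sup>2))"
proof -
  define H where "H z = pi_z_csc z * pi_z_csc (2 * z) / 2" for z
  have "pi_z_csc holomorphic_on ball 0 (1/2)"
    by (rule holomorphic_on_subset[OF pi_z_csc_holomorphic]) auto
  moreover have "(\<lambda>z. pi_z_csc (2 * z)) holomorphic_on ball 0 (1/2)"
  proof -
    have "(\<lambda>z. 2 * z) ` ball 0 (1/2) \<subseteq> ball (0::complex) 1"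
      by (auto simp: norm_mult)
    then show ?thesis
      using holomorphic_on_compose_gen[OF _ pi_z_csc_holomorphic]
      by (auto intro!: holomorphic_intros simp: o_def)
  qed
  ultimately have "H holomorphic_on ball 0 (1/2)"
    unfolding H_def by (auto intro!: holomorphic_intros)
  moreover have "deriv H 0 = 0"
    by (rule deriv_even_at_0[OF \<open>H holomorphic_on ball 0 (1/2)\<close>]) (auto simp: H_def)
  moreover have "principal_part (\<lambda>e. phi_l2 e 1) = (\<lambda>e. \<Sum>j=1..2. Re ((deriv ^^ (2 - j)) H 0 / fact (2 - j)) / e ^ j)"
  proof (rule principal_part_holomorphic_div_power[OF \<open>H holomorphic_on ball 0 (1/2)\<close>])
    fix e :: real assume "0 < e" "e < 1/2"
    then show "e ^ 2 * phi_l2 e 1 = Re (H (of_real e))"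
      using pi_z_csc_of_real[of "2 * e"]
      by (simp add: H_def phi_l2_closed_form pi_z_csc_of_real power2_eq_square)
  qed simp
  ultimately show ?thesis
    unfolding R_op_def by (simp add: numeral_2_eq_2 H_def)
qed

lemma phi_l2_bracket_closed_form:
  assumes "0 < e" "e < 1/2" "c > 0"
  shows "phi_l2_bracket e c =
    c powr (-2 * e) * (pi / sin (pi * e)) * (pi / sin (pi * (2 * e))) - 1 / (2 * e\<^sup>2)
    - 1 / e * (c powr (-e) * (pi / sin (pi * e))) + 1 / e\<^sup>2"
  using assms unfolding phi_l2_bracket_def R_op_R_op_phi_dot_mult_phi_dot
  by (simp add: R_op_phi_dot R_op_phi_l2 phi_l2_closed_form phi_dot_closed_form)

lemma phi_l2_bracket_closed_form_tendsto:
  assumes "c > 0"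
  shows "((\<lambda>e. c powr (-2 * e) * (pi / sin (pi * e)) * (pi / sin (pi * (2 * e))) - 1 / (2 * e\<^sup>2)
    - 1 / e * (c powr (-e) * (pi / sin (pi * e))) + 1 / e\<^sup>2) \<longlongrightarrow> (ln c)\<^sup>2 / 2 + pi\<^sup>2 / 4) (at_right 0)"
  by (rule tendsto_eq_rhs, use assms in real_asymp) (simp add: field_simps power2_eq_square)

theorem mainTheorem6:
  fixes c :: real
  assumes "c > 0"
  shows "((\<lambda>\<epsilon>. phi_l2_bracket \<epsilon> c) \<longlongrightarrow> (ln c)\<^sup>2 / 2 + pi\<^sup>2 / 4) (at_right 0)"
  by (rule Lim_transform_eventually[OF phi_l2_bracket_closed_form_tendsto[OF assms]])
     (use assms in \<open>auto simp: eventually_at_right_field phi_l2_bracket_closed_form intro!: exI[of _ "1/2"]\<close>)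

end
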